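(* Let $\mathcal X=\{1,\dots,n\}$, $N\ge 1$, and for $t=0,\dots,N-1$ let $M(t)=[m_{ij}(t)]_{i,j=1}^n$ be matrices with nonnegative entries such that the product $M(N-1)M(N-2)\cdots M(0)$ has all entries positive. Let $\nu_0,\nu_N$ be probability distributions on $\mathcal X$, and let $\varphi,\hat\varphi$ be nonnegative functions on $\{0,\dots,N\}\times\mathcal X$ solving the Schrödinger system $\varphi(t,i)=\sum_j m_{ij}(t)\varphi(t+1,j)$, $\hat\varphi(t+1,j)=\sum_i m_{ij}(t)\hat\varphi(t,i)$ ($0\le t\le N-1$), $\varphi(0,x)\hat\varphi(0,x)=\nu_0(x)$, $\varphi(N,x)\hat\varphi(N,x)=\nu_N(x)$, with $\varphi>0$, and let $\Pi(t)=\operatorname{diag}(\varphi(t))^{-1}M(t)\operatorname{diag}(\varphi(t+1))$ be the one-step transition matrices of the bridge $\mathfrak M^*[\nu_0,\nu_N]$. Then for any probability distributions $\rho_0,\rho_N$ on $\mathcal X$, the solution of the Schrödinger bridge problem with marginals $\rho_0,\rho_N$ and prior transition matrices $\Pi(t)$ coincides with the solution of the Schrödinger bridge problem with marginals $\rho_0,\rho_N$ and prior transition matrices $M(t)$; i.e. both have initial marginal $\rho_0$ and the same transition matrices $Q^*(t)=\operatorname{diag}(\psi_1(t))^{-1}M(t)\operatorname{diag}(\psi_1(t+1))$, where $(\psi_1,\hat\psi_1)$ solves the Schrödinger system for $M(t)$ with boundary data $\rho_0,\rho_N$.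
   Context: Schrödinger bridge problem (SBP): given nonnegative weights $m_{ij}(t)$ and a positive initial measure $\mu_0$ on $\mathcal X$, the prior is the (not necessarily probability) measure on paths $x=(x_0,\dots,x_N)\in\mathcal X^{N+1}$ given by $\mathfrak M(x)=\mu_0(x_0)m_{x_0x_1}(0)\cdots m_{x_{N-1}x_N}(N-1)$. For probability distributions $\nu_0,\nu_N$ on $\mathcal X$, the SBP asks for the minimizer $\mathfrak M^*[\nu_0,\nu_N]$ of the relative entropy $\mathbb D(P\|\mathfrak M)=\sum_x P(x)\log\frac{P(x)}{\mathfrak M(x)}$ (equal to $+\infty$ if the support of $P$ is not contained in that of $\mathfrak M$, with $0\log 0=0$) over probability distributions $P$ on paths with initial marginal $\nu_0$ and final marginal $\nu_N$. When the product $M(N-1)\cdots M(0)$ is entrywise positive, the solution is unique and is the Markov measure $\nu_0(x_0)\pi_{x_0x_1}(0)\cdots\pi_{x_{N-1}x_N}(N-1)$ with $\pi_{ij}(t)=m_{ij}(t)\varphi(t+1,j)/\varphi(t,i)$, $\varphi,\hat\varphi$ solving the Schrödinger system stated in the claim. The solution does not depend on the choice of positive initial measure $\mu_0$ of the prior. *)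

theory Defs
  imports "HOL-Analysis.Analysis"
begin

text \<open>State space: a finite type 'x (playing the role of {1..n}).
  Paths x = (x_0,...,x_N) are extensional functions on {0..N}.\<close>

definition paths :: "nat \<Rightarrow> (nat \<Rightarrow> 'x) set" where
  "paths N = PiE {..N} (\<lambda>_. UNIV)"

definition prior_meas :: "('x \<Rightarrow> real) \<Rightarrow> (nat \<Rightarrow> 'x \<Rightarrow> 'x \<Rightarrow> real) \<Rightarrow> nat \<Rightarrow> (nat \<Rightarrow> 'x) \<Rightarrow> real" where
  "prior_meas mu0 m N x = mu0 (x 0) * (\<Prod>t<N. m t (x t) (x (Suc t)))"

definition rel_entropy :: "nat \<Rightarrow> ((nat \<Rightarrow> 'x) \<Rightarrow> real) \<Rightarrow> ((nat \<Rightarrow> 'x) \<Rightarrow> real) \<Rightarrow> ereal" where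
  "rel_entropy N P Q =
     (if \<forall>x\<in>paths N. P x \<noteq> 0 \<longrightarrow> Q x \<noteq> 0
      then ereal (\<Sum>x\<in>paths N. if P x = 0 then 0 else P x * ln (P x / Q x))
      else \<infinity>)"

definition prob_dist :: "('x::finite \<Rightarrow> real) \<Rightarrow> bool" where
  "prob_dist p \<longleftrightarrow> (\<forall>x. 0 \<le> p x) \<and> (\<Sum>x\<in>UNIV. p x) = 1"

definition path_marg :: "nat \<Rightarrow> ((nat \<Rightarrow> 'x) \<Rightarrow> real) \<Rightarrow> nat \<Rightarrow> 'x \<Rightarrow> real" where
  "path_marg N P t y = (\<Sum>x\<in>{x\<in>paths N. x t = y}. P x)"

definition admissible :: "nat \<Rightarrow> ('x \<Rightarrow> real) \<Rightarrow> ('x \<Rightarrow> real) \<Rightarrow> ((nat \<Rightarrow> 'x) \<Rightarrow> real) \<Rightarrow> bool" where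
  "admissible N rho0 rhoN P \<longleftrightarrow>
     (\<forall>x\<in>paths N. 0 \<le> P x) \<and> (\<forall>x. x \<notin> paths N \<longrightarrow> P x = 0) \<and>
     (\<Sum>x\<in>paths N. P x) = 1 \<and>
     path_marg N P 0 = rho0 \<and> path_marg N P N = rhoN"

definition SB_solution :: "('x \<Rightarrow> real) \<Rightarrow> (nat \<Rightarrow> 'x \<Rightarrow> 'x \<Rightarrow> real) \<Rightarrow> nat \<Rightarrow>
    ('x \<Rightarrow> real) \<Rightarrow> ('x \<Rightarrow> real) \<Rightarrow> ((nat \<Rightarrow> 'x) \<Rightarrow> real) \<Rightarrow> bool" where
  "SB_solution mu0 m N rho0 rhoN P \<longleftrightarrow>
     admissible N rho0 rhoN P \<and>
     (\<forall>Q. admissible N rho0 rhoN Q \<longrightarrow>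
        rel_entropy N P (prior_meas mu0 m N) \<le> rel_entropy N Q (prior_meas mu0 m N))"

text \<open>mat_chain m k = M(k-1) M(k-2) ... M(0).\<close>
fun mat_chain :: "(nat \<Rightarrow> 'x::finite \<Rightarrow> 'x \<Rightarrow> real) \<Rightarrow> nat \<Rightarrow> 'x \<Rightarrow> 'x \<Rightarrow> real" where
  "mat_chain m 0 = (\<lambda>i j. if i = j then 1 else 0)"
| "mat_chain m (Suc k) = (\<lambda>i j. \<Sum>l\<in>UNIV. m k i l * mat_chain m k l j)"

definition schroedinger_system :: "(nat \<Rightarrow> 'x::finite \<Rightarrow> 'x \<Rightarrow> real) \<Rightarrow> nat \<Rightarrow>
    ('x \<Rightarrow> real) \<Rightarrow> ('x \<Rightarrow> real) \<Rightarrow> (nat \<Rightarrow> 'x \<Rightarrow> real) \<Rightarrow> (nat \<Rightarrow> 'x \<Rightarrow> real) \<Rightarrow> bool" where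
  "schroedinger_system m N nu0 nuN phi phih \<longleftrightarrow>
     (\<forall>t<N. \<forall>i. phi t i = (\<Sum>j\<in>UNIV. m t i j * phi (Suc t) j)) \<and>
     (\<forall>t<N. \<forall>j. phih (Suc t) j = (\<Sum>i\<in>UNIV. m t i j * phih t i)) \<and>
     (\<forall>x. phi 0 x * phih 0 x = nu0 x) \<and>
     (\<forall>x. phi N x * phih N x = nuN x)"

definition bridge_trans :: "(nat \<Rightarrow> 'x \<Rightarrow> 'x \<Rightarrow> real) \<Rightarrow> (nat \<Rightarrow> 'x \<Rightarrow> real) \<Rightarrow> nat \<Rightarrow> 'x \<Rightarrow> 'x \<Rightarrow> real" where
  "bridge_trans m phi t i j = m t i j * phi (Suc t) j / phi t i"

definition markov_meas :: "('x \<Rightarrow> real) \<Rightarrow> (nat \<Rightarrow> 'x \<Rightarrow> 'x \<Rightarrow> real) \<Rightarrow> nat \<Rightarrow> (nat \<Rightarrow> 'x) \<Rightarrow> real" where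
  "markov_meas rho0 q N x =
     (if x \<in> paths N then rho0 (x 0) * (\<Prod>t<N. q t (x t) (x (Suc t))) else 0)"

end

theory Submission imports Defs begin

text \<open>Multiplying a prior on paths by a positive factor a(x_0) b(x_N) changes the relative
  entropy of every admissible P by the same constant
  \<open>\<Sum>\<^sub>i \<rho>\<^sub>0(i) ln a(i) + \<Sum>\<^sub>j \<rho>\<^sub>N(j) ln b(j)\<close>, since only the endpoint marginals of P enter.
  Hence two priors that differ by such an endpoint tilt have the same bridges. The prior
  built from the transition matrices \<open>\<Pi>(t)\<close> is the tilt of the prior built from \<open>M(t)\<close> by
  \<open>\<phi>(N, x\<^sub>N) / \<phi>(0, x\<^sub>0)\<close>, because the product of the \<open>\<Pi>(t)\<close> along a path telescopes.
  Likewise the Markov measure with initial law \<open>\<rho>\<^sub>0\<close> and transitions \<open>Q\<^sup>*(t)\<close> is an admissible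
  endpoint tilt of the prior, and an admissible tilt is the minimizer by Gibbs' inequality.\<close>

lemma finite_paths: "finite (paths N :: (nat \<Rightarrow> 'x::finite) set)"
  unfolding paths_def by (rule finite_PiE) auto

lemma sum_paths_Suc:
  fixes F :: "(nat \<Rightarrow> 'x::finite) \<Rightarrow> 'a::comm_monoid_add"
  shows "(\<Sum>x\<in>paths (Suc n). F x) = (\<Sum>y\<in>paths n. \<Sum>a\<in>UNIV. F (y(Suc n := a)))"
proof -
  have paths_eq: "paths (Suc n) = (\<lambda>(a, g). g(Suc n := a)) ` ((UNIV::'x set) \<times> paths n)"
    unfolding paths_def atMost_Suc by (rule PiE_insert_eq)
  have inj: "inj_on (\<lambda>(a, g). g(Suc n := a)) ((UNIV::'x set) \<times> paths n)"
    unfolding paths_def using inj_combinator[of "Suc n" "{..n}" "\<lambda>_. UNIV::'x set"] by simp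
  have "(\<Sum>x\<in>paths (Suc n). F x)
      = (\<Sum>p\<in>(UNIV::'x set) \<times> paths n. F ((\<lambda>(a, g). g(Suc n := a)) p))"
    unfolding paths_eq using sum.reindex[OF inj] by (simp add: case_prod_beta)
  also have "\<dots> = (\<Sum>a\<in>UNIV. \<Sum>y\<in>paths n. F (y(Suc n := a)))"
    by (simp add: sum.cartesian_product case_prod_beta)
  also have "\<dots> = (\<Sum>y\<in>paths n. \<Sum>a\<in>UNIV. F (y(Suc n := a)))"
    by (rule sum.swap)
  finally show ?thesis .
qed

lemma sum_paths_0:
  fixes F :: "(nat \<Rightarrow> 'x::finite) \<Rightarrow> 'a::comm_monoid_add"
  shows "(\<Sum>x\<in>paths 0. F x) = (\<Sum>a\<in>UNIV. F ((\<lambda>_. undefined)(0 := a)))"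
proof -
  have paths_eq: "paths 0 = (\<lambda>(a, g). g(0 := a)) ` ((UNIV::'x set) \<times> PiE {} (\<lambda>_. UNIV))"
    unfolding paths_def using PiE_insert_eq[of 0 "{}" "\<lambda>_. UNIV::'x set"] by simp
  have inj: "inj_on (\<lambda>(a, g). g(0 := a)) ((UNIV::'x set) \<times> PiE {} (\<lambda>_. UNIV::'x set))"
    using inj_combinator[of "0" "{}" "\<lambda>_. UNIV::'x set"] by simp
  show ?thesis
    unfolding paths_eq sum.reindex[OF inj]
    using sum.cartesian_product[where A=UNIV and B="{\<lambda>x. undefined}" and g="\<lambda>a g. F (g(0:=a))"]
    by (simp add: split_def o_def fun_upd_def)
qed

lemma sum_paths_marginal:
  fixes Q :: "(nat \<Rightarrow> 'x::finite) \<Rightarrow> real"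
  shows "(\<Sum>x\<in>paths N. Q x * h (x t)) = (\<Sum>y\<in>UNIV. path_marg N Q t y * h y)"
proof -
  have "(\<Sum>y\<in>UNIV. path_marg N Q t y * h y)
      = (\<Sum>y\<in>UNIV. \<Sum>x\<in>{x\<in>paths N. x t = y}. Q x * h (x t))"
    unfolding path_marg_def sum_distrib_right by (intro sum.cong) auto
  also have "\<dots> = (\<Sum>x\<in>paths N. Q x * h (x t))"
    by (rule sum.group) (auto simp: finite_paths)
  finally show ?thesis by simp
qed

fun forward_law :: "('x::finite \<Rightarrow> real) \<Rightarrow> (nat \<Rightarrow> 'x \<Rightarrow> 'x \<Rightarrow> real) \<Rightarrow> nat \<Rightarrow> 'x \<Rightarrow> real"
where
  "forward_law f w 0 = f"
| "forward_law f w (Suc n) = (\<lambda>j. \<Sum>i\<in>UNIV. forward_law f w n i * w n i j)"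

lemma sum_paths_chain:
  fixes f g :: "'x::finite \<Rightarrow> real"
  shows "(\<Sum>x\<in>paths n. f (x 0) * (\<Prod>t<n. w t (x t) (x (Suc t))) * g (x n))
       = (\<Sum>j\<in>UNIV. forward_law f w n j * g j)"
proof (induction n arbitrary: g)
  case 0
  show ?case by (simp add: sum_paths_0)
next
  case (Suc n)
  have prod_upd: "(\<Prod>t<n. w t ((y(Suc n := a)) t) ((y(Suc n := a)) (Suc t)))
      = (\<Prod>t<n. w t (y t) (y (Suc t)))" for y a
    by (rule prod.cong) auto
  have "(\<Sum>x\<in>paths (Suc n). f (x 0) * (\<Prod>t<Suc n. w t (x t) (x (Suc t))) * g (x (Suc n)))
     = (\<Sum>a\<in>UNIV. \<Sum>y\<in>paths n. f (y 0) * (\<Prod>t<n. w t (y t) (y (Suc t))) * (w n (y n) a * g a))"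
    unfolding sum_paths_Suc by (subst sum.swap) (simp add: prod_upd mult_ac)
  also have "\<dots> = (\<Sum>a\<in>UNIV. \<Sum>j\<in>UNIV. forward_law f w n j * (w n j a * g a))"
  proof (rule sum.cong[OF refl])
    fix a
    show "(\<Sum>y\<in>paths n. f (y 0) * (\<Prod>t<n. w t (y t) (y (Suc t))) * (w n (y n) a * g a))
        = (\<Sum>j\<in>UNIV. forward_law f w n j * (w n j a * g a))"
      using Suc.IH[of "\<lambda>j. w n j a * g a"] by (simp add: mult.assoc)
  qed
  also have "\<dots> = (\<Sum>a\<in>UNIV. forward_law f w (Suc n) a * g a)"
    by (simp add: sum_distrib_left sum_distrib_right mult_ac)
  finally show ?case .
qed

lemma sum_forward_law_stochastic:
  assumes "\<forall>t<n. \<forall>i. (\<Sum>j\<in>UNIV. w t i j) = 1"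
  shows "(\<Sum>j\<in>UNIV. forward_law f w n j) = (\<Sum>j\<in>UNIV. f j)"
  using assms
proof (induction n)
  case 0 then show ?case by simp
next
  case (Suc n)
  have "(\<Sum>j\<in>UNIV. forward_law f w (Suc n) j)
      = (\<Sum>i\<in>UNIV. \<Sum>j\<in>UNIV. forward_law f w n i * w n i j)"
    unfolding forward_law.simps by (rule sum.swap)
  also have "\<dots> = (\<Sum>i\<in>UNIV. forward_law f w n i * (\<Sum>j\<in>UNIV. w n i j))"
    by (simp add: sum_distrib_left)
  also have "\<dots> = (\<Sum>i\<in>UNIV. forward_law f w n i)" using Suc.prems by simp
  finally show ?case using Suc by simp
qed

lemma path_marg_markov_meas_initial:
  fixes f :: "'x::finite \<Rightarrow> real"
  assumes "\<forall>t<N. \<forall>i. (\<Sum>j\<in>UNIV. q t i j) = 1"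
  shows "path_marg N (markov_meas f q N) 0 = f"
proof
  fix i
  define f\<^sub>i where "f\<^sub>i k = (if k = i then f k else 0)" for k
  have "path_marg N (markov_meas f q N) 0 i
      = (\<Sum>x\<in>paths N. if x 0 = i then markov_meas f q N x else 0)"
    unfolding path_marg_def by (simp add: sum.inter_filter finite_paths)
  also have "\<dots> = (\<Sum>x\<in>paths N. f\<^sub>i (x 0) * (\<Prod>t<N. q t (x t) (x (Suc t))) * 1)"
    by (rule sum.cong) (auto simp: f\<^sub>i_def markov_meas_def)
  also have "\<dots> = (\<Sum>j\<in>UNIV. forward_law f\<^sub>i q N j)"
    using sum_paths_chain[of f\<^sub>i q N "\<lambda>_. 1"] by simp
  also have "\<dots> = f i"
    using sum_forward_law_stochastic[OF assms] by (simp add: f\<^sub>i_def)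
  finally show "path_marg N (markov_meas f q N) 0 i = f i" .
qed

lemma path_marg_markov_meas_final:
  fixes f :: "'x::finite \<Rightarrow> real"
  shows "path_marg N (markov_meas f q N) N = forward_law f q N"
proof
  fix j
  have "path_marg N (markov_meas f q N) N j
      = (\<Sum>x\<in>paths N. if x N = j then markov_meas f q N x else 0)"
    unfolding path_marg_def by (simp add: sum.inter_filter finite_paths)
  also have "\<dots> = (\<Sum>x\<in>paths N.
      f (x 0) * (\<Prod>t<N. q t (x t) (x (Suc t))) * (if x N = j then 1 else 0))"
    by (rule sum.cong) (auto simp: markov_meas_def)
  also have "\<dots> = (\<Sum>k\<in>UNIV. forward_law f q N k * (if k = j then 1 else 0))"
    by (rule sum_paths_chain)
  also have "\<dots> = forward_law f q N j"
    by (simp add: if_distrib[where f="\<lambda>y. _ * y"] cong: if_cong)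
  finally show "path_marg N (markov_meas f q N) N j = forward_law f q N j" .
qed

lemma prod_telescope:
  assumes "\<forall>t\<le>n. u t \<noteq> (0::real)"
  shows "(\<Prod>t<n. c t * u (Suc t) / u t) = (\<Prod>t<n. c t) * u n / u 0"
  using assms by (induction n) (auto simp: field_simps)

lemma prod_bridge_trans:
  assumes "\<forall>t\<le>N. \<forall>i. phi t i \<noteq> 0"
  shows "(\<Prod>t<N. bridge_trans m phi t (x t) (x (Suc t)))
       = (\<Prod>t<N. m t (x t) (x (Suc t))) * phi N (x N) / phi 0 (x 0)"
  unfolding bridge_trans_def
  by (rule prod_telescope[where u="\<lambda>t. phi t (x t)" and c="\<lambda>t. m t (x t) (x (Suc t))"])
     (use assms in auto)

lemma bridge_trans_stochastic:
  assumes "schroedinger_system m N nu0 nuN phi phih" and "\<forall>t\<le>N. \<forall>i. phi t i \<noteq> 0"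
  shows "\<forall>t<N. \<forall>i. (\<Sum>j\<in>UNIV. bridge_trans m phi t i j) = 1"
proof (intro allI impI)
  fix t i assume "t < N"
  have "(\<Sum>j\<in>UNIV. bridge_trans m phi t i j) = (\<Sum>j\<in>UNIV. m t i j * phi (Suc t) j) / phi t i"
    unfolding bridge_trans_def by (simp add: sum_divide_distrib)
  also have "\<dots> = 1"
  proof -
    from assms(1) \<open>t < N\<close> have "phi t i = (\<Sum>j\<in>UNIV. m t i j * phi (Suc t) j)"
      unfolding schroedinger_system_def by blast
    moreover from assms(2) \<open>t < N\<close> have "phi t i \<noteq> 0" by simp
    ultimately show ?thesis by simp
  qed
  finally show "(\<Sum>j\<in>UNIV. bridge_trans m phi t i j) = 1" .
qed

lemma forward_law_bridge_trans:
  assumes sys: "schroedinger_system m N nu0 nuN phi phih"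
    and nz: "\<forall>t\<le>N. \<forall>i. phi t i \<noteq> 0"
    and "n \<le> N"
  shows "forward_law nu0 (bridge_trans m phi) n j = phi n j * phih n j"
  using \<open>n \<le> N\<close>
proof (induction n arbitrary: j)
  case 0
  then show ?case using sys unfolding schroedinger_system_def by simp
next
  case (Suc n)
  have "forward_law nu0 (bridge_trans m phi) (Suc n) j
      = (\<Sum>i\<in>UNIV. phi n i * phih n i * (m n i j * phi (Suc n) j / phi n i))"
    by (simp only: forward_law.simps Suc.IH[OF Suc_leD[OF Suc.prems]] bridge_trans_def)
  also have "\<dots> = phi (Suc n) j * (\<Sum>i\<in>UNIV. m n i j * phih n i)"
    unfolding sum_distrib_left using nz Suc.prems by (intro sum.cong) (auto simp: field_simps)
  also have "\<dots> = phi (Suc n) j * phih (Suc n) j"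
    using sys Suc.prems unfolding schroedinger_system_def by simp
  finally show ?case .
qed

lemma markov_meas_bridge_trans_admissible:
  fixes m :: "nat \<Rightarrow> 'x::finite \<Rightarrow> 'x \<Rightarrow> real"
  assumes m: "\<forall>t<N. \<forall>i j. 0 \<le> m t i j"
    and sys: "schroedinger_system m N rho0 rhoN psi psih"
    and psi: "\<forall>t\<le>N. \<forall>i. 0 < psi t i"
    and rho0: "prob_dist rho0"
  shows "admissible N rho0 rhoN (markov_meas rho0 (bridge_trans m psi) N)"
proof -
  define PS where "PS = markov_meas rho0 (bridge_trans m psi) N"
  have nz: "\<forall>t\<le>N. \<forall>i. psi t i \<noteq> 0" using psi by (auto simp: less_le)
  have marg0: "path_marg N PS 0 = rho0"
    unfolding PS_def by (rule path_marg_markov_meas_initial[OF bridge_trans_stochastic[OF sys nz]])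
  have "path_marg N PS N j = rhoN j" for j
    using forward_law_bridge_trans[OF sys nz, of N] sys
    unfolding PS_def path_marg_markov_meas_final schroedinger_system_def by simp
  then have margN: "path_marg N PS N = rhoN" by blast
  have "(\<Sum>x\<in>paths N. PS x) = (\<Sum>i\<in>UNIV. rho0 i)"
    using sum_paths_marginal[where Q=PS and h="\<lambda>_. 1" and t=0] marg0 by simp
  then have sum1: "(\<Sum>x\<in>paths N. PS x) = 1" using rho0 unfolding prob_dist_def by simp
  have "0 \<le> bridge_trans m psi t i j" if "t < N" for t i j
  proof -
    have "0 \<le> m t i j" "0 < psi (Suc t) j" "0 < psi t i" using m psi that by auto
    then show ?thesis unfolding bridge_trans_def by simp
  qed
  then have "0 \<le> PS x" for x
    using rho0 unfolding PS_def markov_meas_def prob_dist_def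
    by (auto intro!: mult_nonneg_nonneg prod_nonneg)
  moreover have "PS x = 0" if "x \<notin> paths N" for x
    using that unfolding PS_def markov_meas_def by simp
  ultimately show ?thesis
    using marg0 margN sum1 unfolding admissible_def PS_def by blast
qed

lemma admissible_initial_pos:
  fixes Q :: "(nat \<Rightarrow> 'x::finite) \<Rightarrow> real"
  assumes adm: "admissible N rho0 rhoN Q" and x: "x \<in> paths N" and "Q x \<noteq> 0"
  shows "0 < rho0 (x 0)"
proof -
  have nn: "\<forall>y\<in>paths N. 0 \<le> Q y" using adm unfolding admissible_def by auto
  have "Q x \<le> (\<Sum>y\<in>{y\<in>paths N. y 0 = x 0}. Q y)"
    by (rule member_le_sum) (use x nn in \<open>auto intro: finite_subset[OF _ finite_paths]\<close>)
  also have "\<dots> = rho0 (x 0)" using adm unfolding admissible_def path_marg_def by auto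
  finally show ?thesis using nn x \<open>Q x \<noteq> 0\<close> by force
qed

lemma rel_entropy_self: "rel_entropy N P P = 0"
proof -
  have "(\<Sum>x\<in>paths N. if P x = 0 then 0 else P x * ln (P x / P x)) = 0"
    by (rule sum.neutral) auto
  then show ?thesis unfolding rel_entropy_def by (simp add: zero_ereal_def)
qed

lemma rel_entropy_nonneg:
  fixes P Q :: "(nat \<Rightarrow> 'x::finite) \<Rightarrow> real"
  assumes adm: "admissible N rho0 rhoN Q"
    and P: "\<forall>x\<in>paths N. 0 \<le> P x" "(\<Sum>x\<in>paths N. P x) = 1"
  shows "0 \<le> rel_entropy N Q P"
proof (cases "\<forall>x\<in>paths N. Q x \<noteq> 0 \<longrightarrow> P x \<noteq> 0")
  case False then show ?thesis unfolding rel_entropy_def by auto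
next
  case True
  have Q: "\<forall>y\<in>paths N. 0 \<le> Q y" "(\<Sum>x\<in>paths N. Q x) = 1"
    using adm unfolding admissible_def by auto
  have term_ge: "Q x - P x \<le> (if Q x = 0 then 0 else Q x * ln (Q x / P x))"
    if x: "x \<in> paths N" for x
  proof (cases "Q x = 0")
    case True then show ?thesis using P x by simp
  next
    case False
    have q: "0 < Q x" and p: "0 < P x" using Q P True x False by force+
    have "Q x * ln (P x / Q x) \<le> Q x * (P x / Q x - 1)"
      using q p by (intro mult_left_mono ln_le_minus_one) simp_all
    also have "\<dots> = P x - Q x" using q by (simp add: field_simps)
    finally show ?thesis using False q p by (simp add: ln_div algebra_simps)
  qed
  have "0 = (\<Sum>x\<in>paths N. Q x - P x)" using Q P by (simp add: sum_subtractf)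
  also have "\<dots> \<le> (\<Sum>x\<in>paths N. if Q x = 0 then 0 else Q x * ln (Q x / P x))"
    by (rule sum_mono) (use term_ge in auto)
  finally show ?thesis unfolding rel_entropy_def using True by simp
qed

lemma rel_entropy_endpoint_tilt:
  fixes Q R S :: "(nat \<Rightarrow> 'x::finite) \<Rightarrow> real"
  assumes adm: "admissible N rho0 rhoN Q"
    and R: "\<forall>x\<in>paths N. 0 \<le> R x"
    and S: "\<forall>x\<in>paths N. S x = R x * a (x 0) * b (x N)"
    and a: "\<forall>i. 0 \<le> a i" and b: "\<forall>j. 0 < b j"
    and a_zero: "\<forall>i. a i = 0 \<longrightarrow> rho0 i = 0"
  shows "rel_entropy N Q R = rel_entropy N Q S
           + ereal ((\<Sum>i\<in>UNIV. rho0 i * ln (a i)) + (\<Sum>j\<in>UNIV. rhoN j * ln (b j)))"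
proof -
  have Q: "\<forall>y\<in>paths N. 0 \<le> Q y" using adm unfolding admissible_def by auto
  have a_pos: "0 < a (x 0)" if "x \<in> paths N" "Q x \<noteq> 0" for x
    using admissible_initial_pos[OF adm that] a a_zero by (metis less_eq_real_def less_irrefl)
  have supp: "R x \<noteq> 0 \<longleftrightarrow> S x \<noteq> 0" if "x \<in> paths N" "Q x \<noteq> 0" for x
    using a_pos[OF that] b[rule_format, of "x N"] S that by auto
  show ?thesis
  proof (cases "\<forall>x\<in>paths N. Q x \<noteq> 0 \<longrightarrow> R x \<noteq> 0")
    case False
    then show ?thesis using supp unfolding rel_entropy_def by auto
  next
    case True
    have term_eq: "(if Q x = 0 then 0 else Q x * ln (Q x / R x))
        = (if Q x = 0 then 0 else Q x * ln (Q x / S x)) + (Q x * ln (a (x 0)) + Q x * ln (b (x N)))"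
      if x: "x \<in> paths N" for x
    proof (cases "Q x = 0")
      case False
      have "0 < Q x" "0 < R x" "0 < a (x 0)" "0 < b (x N)"
        using Q R True a_pos b x False by force+
      then have "ln (Q x / R x) = ln (Q x / S x) + ln (a (x 0)) + ln (b (x N))"
        using S x by (simp add: ln_div ln_mult)
      then show ?thesis using False by (simp add: algebra_simps)
    qed simp
    have "(\<Sum>x\<in>paths N. if Q x = 0 then 0 else Q x * ln (Q x / R x))
      = (\<Sum>x\<in>paths N. if Q x = 0 then 0 else Q x * ln (Q x / S x))
        + ((\<Sum>x\<in>paths N. Q x * ln (a (x 0))) + (\<Sum>x\<in>paths N. Q x * ln (b (x N))))"
      by (simp add: term_eq sum.distrib)
    also have "(\<Sum>x\<in>paths N. Q x * ln (a (x 0))) = (\<Sum>i\<in>UNIV. rho0 i * ln (a i))"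
      using sum_paths_marginal[where Q=Q and h="\<lambda>i. ln (a i)" and t=0] adm unfolding admissible_def by simp
    also have "(\<Sum>x\<in>paths N. Q x * ln (b (x N))) = (\<Sum>j\<in>UNIV. rhoN j * ln (b j))"
      using sum_paths_marginal[where Q=Q and h="\<lambda>i. ln (b i)" and t=N] adm unfolding admissible_def by simp
    finally show ?thesis unfolding rel_entropy_def using True supp by simp
  qed
qed

lemma SB_solution_endpoint_tilt_iff:
  fixes mu0 mu0' :: "'x::finite \<Rightarrow> real"
  assumes R: "\<forall>x\<in>paths N. 0 \<le> prior_meas mu0 m N x"
    and S: "\<forall>x\<in>paths N. prior_meas mu0' m' N x = prior_meas mu0 m N x * a (x 0) * b (x N)"
    and a: "\<forall>i. 0 \<le> a i" and b: "\<forall>j. 0 < b j"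
    and a_zero: "\<forall>i. a i = 0 \<longrightarrow> rho0 i = 0"
  shows "SB_solution mu0' m' N rho0 rhoN P \<longleftrightarrow> SB_solution mu0 m N rho0 rhoN P"
proof -
  have "rel_entropy N P (prior_meas mu0' m' N) \<le> rel_entropy N Q (prior_meas mu0' m' N)
    \<longleftrightarrow> rel_entropy N P (prior_meas mu0 m N) \<le> rel_entropy N Q (prior_meas mu0 m N)"
    if "admissible N rho0 rhoN P" "admissible N rho0 rhoN Q" for Q
    using rel_entropy_endpoint_tilt[OF that(1) R S a b a_zero]
      rel_entropy_endpoint_tilt[OF that(2) R S a b a_zero]
    by (simp add: ereal_add_le_add_iff2)
  then show ?thesis unfolding SB_solution_def by blast
qed

lemma SB_solution_of_admissible_endpoint_tilt:
  fixes mu0 :: "'x::finite \<Rightarrow> real"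
  assumes adm: "admissible N rho0 rhoN S"
    and R: "\<forall>x\<in>paths N. 0 \<le> prior_meas mu0 m N x"
    and S: "\<forall>x\<in>paths N. S x = prior_meas mu0 m N x * a (x 0) * b (x N)"
    and a: "\<forall>i. 0 \<le> a i" and b: "\<forall>j. 0 < b j"
    and a_zero: "\<forall>i. a i = 0 \<longrightarrow> rho0 i = 0"
  shows "SB_solution mu0 m N rho0 rhoN S"
proof -
  note tilt = rel_entropy_endpoint_tilt[OF _ R S a b a_zero]
  have S_prob: "\<forall>x\<in>paths N. 0 \<le> S x" "(\<Sum>x\<in>paths N. S x) = 1"
    using adm unfolding admissible_def by auto
  have "rel_entropy N S (prior_meas mu0 m N) \<le> rel_entropy N Q (prior_meas mu0 m N)"
    if "admissible N rho0 rhoN Q" for Q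
    unfolding tilt[OF adm] tilt[OF that] rel_entropy_self
    using add_right_mono[OF rel_entropy_nonneg[OF that S_prob]] by simp
  with adm show ?thesis unfolding SB_solution_def by blast
qed

lemma prior_meas_nonneg:
  assumes "\<forall>i. 0 \<le> mu0 i" and "\<forall>t<N. \<forall>i j. 0 \<le> m t i j"
  shows "0 \<le> prior_meas mu0 m N x"
  unfolding prior_meas_def using assms by (auto intro!: mult_nonneg_nonneg prod_nonneg)

lemma prior_meas_bridge_trans:
  assumes "\<forall>t\<le>N. \<forall>i. phi t i \<noteq> 0" and "mu0 (x 0) \<noteq> 0"
  shows "prior_meas mu0' (bridge_trans m phi) N x
       = prior_meas mu0 m N x * (mu0' (x 0) / (mu0 (x 0) * phi 0 (x 0))) * phi N (x N)"
proof -
  have "phi 0 (x 0) \<noteq> 0" using assms(1) by simp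
  then show ?thesis
    unfolding prior_meas_def prod_bridge_trans[OF assms(1)] using assms(2) by (simp add: field_simps)
qed

lemma markov_meas_eq_prior_meas: "x \<in> paths N \<Longrightarrow> markov_meas f q N x = prior_meas f q N x"
  unfolding markov_meas_def prior_meas_def by simp

lemma SB_solution_markov_meas_bridge_trans:
  fixes m :: "nat \<Rightarrow> 'x::finite \<Rightarrow> 'x \<Rightarrow> real"
  assumes m: "\<forall>t<N. \<forall>i j. 0 \<le> m t i j"
    and sys: "schroedinger_system m N rho0 rhoN psi psih"
    and psi: "\<forall>t\<le>N. \<forall>i. 0 < psi t i"
    and rho0: "prob_dist rho0"
    and mu0: "\<forall>i. 0 < mu0 i"
  shows "SB_solution mu0 m N rho0 rhoN (markov_meas rho0 (bridge_trans m psi) N)"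
proof (rule SB_solution_of_admissible_endpoint_tilt)
  show "admissible N rho0 rhoN (markov_meas rho0 (bridge_trans m psi) N)"
    using markov_meas_bridge_trans_admissible[OF m sys psi rho0] .
  show "\<forall>x\<in>paths N. 0 \<le> prior_meas mu0 m N x"
    using prior_meas_nonneg[OF _ m] mu0 by (simp add: less_imp_le)
  show "\<forall>x\<in>paths N. markov_meas rho0 (bridge_trans m psi) N x
      = prior_meas mu0 m N x * (rho0 (x 0) / (mu0 (x 0) * psi 0 (x 0))) * psi N (x N)"
  proof
    fix x :: "nat \<Rightarrow> 'x" assume "x \<in> paths N"
    have "\<forall>t\<le>N. \<forall>i. psi t i \<noteq> 0" "mu0 (x 0) \<noteq> 0" using psi mu0 by (auto simp: less_le)
    then show "markov_meas rho0 (bridge_trans m psi) N x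
      = prior_meas mu0 m N x * (rho0 (x 0) / (mu0 (x 0) * psi 0 (x 0))) * psi N (x N)"
      unfolding markov_meas_eq_prior_meas[OF \<open>x \<in> paths N\<close>] by (rule prior_meas_bridge_trans)
  qed
  have "0 \<le> rho0 i" "0 < mu0 i * psi 0 i" for i
    using rho0 mu0 psi unfolding prob_dist_def by simp_all
  then show "\<forall>i. 0 \<le> rho0 i / (mu0 i * psi 0 i)"
    and "\<forall>i. rho0 i / (mu0 i * psi 0 i) = 0 \<longrightarrow> rho0 i = 0"
    by (auto intro: divide_nonneg_pos) (metis mult_eq_0_iff less_irrefl)+
  show "\<forall>j. 0 < psi N j" using psi by simp
qed

theorem mainTheorem1:
  fixes m :: "nat \<Rightarrow> 'x::finite \<Rightarrow> 'x \<Rightarrow> real"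
    and N :: nat
    and nu0 nuN rho0 rhoN mu0 mu0' :: "'x \<Rightarrow> real"
    and phi phih :: "nat \<Rightarrow> 'x \<Rightarrow> real"
  assumes "N \<ge> 1"
    and "\<forall>t<N. \<forall>i j. 0 \<le> m t i j"
    and "\<forall>i j. 0 < mat_chain m N i j"
    and "prob_dist nu0" and "prob_dist nuN"
    and "schroedinger_system m N nu0 nuN phi phih"
    and "\<forall>t\<le>N. \<forall>x. 0 < phi t x \<and> 0 \<le> phih t x"
    and "prob_dist rho0" and "prob_dist rhoN"
    and "\<forall>x. 0 < mu0 x" and "\<forall>x. 0 < mu0' x"
  shows "(\<forall>P. SB_solution mu0' (bridge_trans m phi) N rho0 rhoN P
              \<longleftrightarrow> SB_solution mu0 m N rho0 rhoN P)
       \<and> (\<forall>psi psih. schroedinger_system m N rho0 rhoN psi psih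
              \<and> (\<forall>t\<le>N. \<forall>x. 0 < psi t x \<and> 0 \<le> psih t x)
            \<longrightarrow> SB_solution mu0' (bridge_trans m phi) N rho0 rhoN
                   (markov_meas rho0 (bridge_trans m psi) N)
              \<and> SB_solution mu0 m N rho0 rhoN
                   (markov_meas rho0 (bridge_trans m psi) N))"
proof -
  \<comment> \<open>Positivity of \<open>M(N-1)\<cdots>M(0)\<close> and the laws \<open>\<nu>\<^sub>0, \<nu>\<^sub>N, \<rho>\<^sub>N\<close> only matter for the existence
    of solutions of the Schroedinger systems, which are given here.\<close>
  note m = assms(2) and mu0 = assms(10) and mu0' = assms(11)
  have phi: "\<forall>t\<le>N. \<forall>i. phi t i \<noteq> 0" using assms(7) by (auto simp: less_le)
  have same_bridges: "SB_solution mu0' (bridge_trans m phi) N rho0 rhoN P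
      \<longleftrightarrow> SB_solution mu0 m N rho0 rhoN P" for P
  proof (rule SB_solution_endpoint_tilt_iff)
    show "\<forall>x\<in>paths N. 0 \<le> prior_meas mu0 m N x"
      using prior_meas_nonneg[OF _ m] mu0 by (simp add: less_imp_le)
    show "\<forall>x\<in>paths N. prior_meas mu0' (bridge_trans m phi) N x
        = prior_meas mu0 m N x * (mu0' (x 0) / (mu0 (x 0) * phi 0 (x 0))) * phi N (x N)"
      using prior_meas_bridge_trans[OF phi] mu0 by (simp add: less_le del: divide_divide_eq_left)
    have "0 < mu0' i / (mu0 i * phi 0 i)" for i using assms(7) mu0 mu0' by simp
    then show "\<forall>i. 0 \<le> mu0' i / (mu0 i * phi 0 i)"
      and "\<forall>i. mu0' i / (mu0 i * phi 0 i) = 0 \<longrightarrow> rho0 i = 0"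
      by (auto intro: less_imp_le) (metis divide_eq_0_iff mult_eq_0_iff less_irrefl)+
    show "\<forall>j. 0 < phi N j" using assms(7) by simp
  qed
  have markov_bridge: "SB_solution mu0 m N rho0 rhoN (markov_meas rho0 (bridge_trans m psi) N)"
    if "schroedinger_system m N rho0 rhoN psi psih" "\<forall>t\<le>N. \<forall>x. 0 < psi t x \<and> 0 \<le> psih t x"
    for psi psih
    using SB_solution_markov_meas_bridge_trans[OF m that(1) _ assms(8) mu0] that(2) by simp
  show ?thesis using same_bridges markov_bridge by blast
qed

end
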